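(* In the $L^p$ setting of the context ($1<p<\infty$), assume in addition that the measure space $(\Omega,\mu)$ is separable, $G$ is countable and $E$ is separable. Then for every finite $F\subset G$ and $a_g\in A$ ($g\in F$), the element $\bar b=\sum_{g\in F}\bar a_gV_g\in B(\bar A,V_g)$ satisfies $$\|\bar b\|_{L(H)}=\operatorname{ess\,sup}_{x\in\Omega}\|b_x\|_{L(l^p(G,E))},$$ where $b_x=\sum_{g\in F}\pi_x(a_g)\pi_x(T_g)$.
   Context: Setting: $(\Omega,\mu)$ is a measure space with $\sigma$-additive $\sigma$-finite measure $\mu$, $E$ a Banach space, $G$ a discrete group, $\{\alpha_g\}_{g\in G}$ a group of invertible measurable maps $\Omega\to\Omega$ ($\alpha_{gh}=\alpha_g\circ\alpha_h$, $\alpha_e=\mathrm{id}$) such that $\alpha_g$ and $\alpha_g^{-1}$ preserve $\mu$-null sets. $D=L^p_\mu(\Omega,E)$; $A=L^\infty_\mu(\Omega,L(E))$ acts on $D$ by $(af)(x)=a(x)f(x)$; $(T_gf)(x)=\rho_g(x)^{1/p}f(\alpha_g^{-1}(x))$, where $\rho_g$ is the Radon–Nikodym derivative of the measure $\Delta\mapsto\mu(\alpha_g^{-1}(\Delta))$ with respect to $\mu$; $\hat T_g(a)=T_gaT_g^{-1}$, i.e. $\hat T_g(a)(x)=a(\alpha_g^{-1}(x))$. Regular representation: $H=l^p(G,D)$; $(V_{g_0}\xi)(g)=\xi(gg_0)$; $(\bar a\xi)(g)=\hat T_g(a)\xi(g)$; $B(\bar A,V_g)$ is the closed subalgebra of $L(H)$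 generated by $\bar A$ and the $V_g$. Trajectorial representations: for $x\in\Omega$, $\pi_x(a)$ and $\pi_x(T_{g_0})$ are the operators on $l^p(G,E)$ given by $(\pi_x(a)\xi)_g=a(\alpha_g^{-1}(x))\xi_g$ and $(\pi_x(T_{g_0})\xi)_g=\xi_{gg_0}$, $\xi=(\xi_g)_{g\in G}\in l^p(G,E)$ (defined for a.e. $x$ after choosing representatives of the $a_g$). *)

theory Defs
  imports "HOL-Analysis.Analysis" "HOL-Probability.Probability"
begin

definition separable_measure :: "'w measure \<Rightarrow> bool" where
  "separable_measure M \<longleftrightarrow> (\<exists>C. countable C \<and> C \<subseteq> sets M \<and>
     (\<forall>A\<in>sets M. emeasure M A < \<infinity> \<longrightarrow>
        (\<forall>e::real. e > 0 \<longrightarrow> (\<exists>c\<in>C. emeasure M ((A - c) \<union> (c - A)) < ennreal e))))"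

definition enn_root :: "real \<Rightarrow> ennreal \<Rightarrow> ennreal" where
  "enn_root p x = (if x = \<infinity> then \<infinity> else ennreal (enn2real x powr (1 / p)))"

definition Lp_pow :: "'w measure \<Rightarrow> real \<Rightarrow> ('w \<Rightarrow> 'e::real_normed_vector) \<Rightarrow> ennreal" where
  "Lp_pow M p f = (\<integral>\<^sup>+ x. ennreal (norm (f x) powr p) \<partial>M)"

text \<open>D = L^p(Omega, E) (E separable, so strong measurability = Borel measurability).\<close>
definition Dspace :: "'w measure \<Rightarrow> real \<Rightarrow> ('w \<Rightarrow> 'e::real_normed_vector) set" where
  "Dspace M p = {f. f \<in> borel_measurable M \<and> Lp_pow M p f < \<infinity>}"

definition H_pow :: "'w measure \<Rightarrow> real \<Rightarrow> ('g \<Rightarrow> 'w \<Rightarrow> 'e::real_normed_vector) \<Rightarrow> ennreal" where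
  "H_pow M p \<xi> = (\<integral>\<^sup>+ g. Lp_pow M p (\<xi> g) \<partial>count_space UNIV)"

definition Hspace :: "'w measure \<Rightarrow> real \<Rightarrow> ('g \<Rightarrow> 'w \<Rightarrow> 'e::real_normed_vector) set" where
  "Hspace M p = {\<xi>. (\<forall>g. \<xi> g \<in> Dspace M p) \<and> H_pow M p \<xi> < \<infinity>}"

definition H_norm :: "'w measure \<Rightarrow> real \<Rightarrow> ('g \<Rightarrow> 'w \<Rightarrow> 'e::real_normed_vector) \<Rightarrow> ennreal" where
  "H_norm M p \<xi> = enn_root p (H_pow M p \<xi>)"

definition lp_pow :: "real \<Rightarrow> ('g \<Rightarrow> 'e::real_normed_vector) \<Rightarrow> ennreal" where
  "lp_pow p \<eta> = (\<integral>\<^sup>+ g. ennreal (norm (\<eta> g) powr p) \<partial>count_space UNIV)"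

definition lpspace :: "real \<Rightarrow> ('g \<Rightarrow> 'e::real_normed_vector) set" where
  "lpspace p = {\<eta>. lp_pow p \<eta> < \<infinity>}"

definition lp_norm :: "real \<Rightarrow> ('g \<Rightarrow> 'e::real_normed_vector) \<Rightarrow> ennreal" where
  "lp_norm p \<eta> = enn_root p (lp_pow p \<eta>)"

text \<open>Operator norm (in ennreal, so unboundedness gives infinity) of T on the space X with norm N.\<close>
definition op_norm :: "'x set \<Rightarrow> ('x \<Rightarrow> ennreal) \<Rightarrow> ('x \<Rightarrow> 'y) \<Rightarrow> ('y \<Rightarrow> ennreal) \<Rightarrow> ennreal" where
  "op_norm X N T N' = Sup ((\<lambda>\<xi>. N' (T \<xi>)) ` {\<xi>\<in>X. N \<xi> \<le> 1})"

text \<open>A = L^infinity(Omega, L(E)): strongly measurable, essentially bounded operator functions.\<close>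
definition Linf_op :: "'w measure \<Rightarrow> ('w \<Rightarrow> ('e::real_normed_vector \<Rightarrow>\<^sub>L 'e)) set" where
  "Linf_op M = {a. (\<forall>e. (\<lambda>x. blinfun_apply (a x) e) \<in> borel_measurable M) \<and>
                    (\<exists>C. AE x in M. norm (a x) \<le> C)}"

text \<open>hat T_g (a) (x) = a (alpha_g^{-1} x); the group G is written additively.\<close>
definition hatT :: "('g::group_add \<Rightarrow> 'w \<Rightarrow> 'w) \<Rightarrow> 'g \<Rightarrow> ('w \<Rightarrow> 'c) \<Rightarrow> 'w \<Rightarrow> 'c" where
  "hatT \<alpha> g a = (\<lambda>x. a (\<alpha> (- g) x))"

definition bar_op :: "('g::group_add \<Rightarrow> 'w \<Rightarrow> 'w) \<Rightarrow> ('w \<Rightarrow> ('e::real_normed_vector \<Rightarrow>\<^sub>L 'e))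
     \<Rightarrow> ('g \<Rightarrow> 'w \<Rightarrow> 'e) \<Rightarrow> ('g \<Rightarrow> 'w \<Rightarrow> 'e)" where
  "bar_op \<alpha> a \<xi> = (\<lambda>g x. blinfun_apply (hatT \<alpha> g a x) (\<xi> g x))"

definition V_op :: "'g::group_add \<Rightarrow> ('g \<Rightarrow> 'd) \<Rightarrow> ('g \<Rightarrow> 'd)" where
  "V_op g0 \<xi> = (\<lambda>g. \<xi> (g + g0))"

definition reg_b :: "('g::group_add \<Rightarrow> 'w \<Rightarrow> 'w) \<Rightarrow> 'g set \<Rightarrow> ('g \<Rightarrow> 'w \<Rightarrow> ('e::real_normed_vector \<Rightarrow>\<^sub>L 'e))
     \<Rightarrow> ('g \<Rightarrow> 'w \<Rightarrow> 'e) \<Rightarrow> ('g \<Rightarrow> 'w \<Rightarrow> 'e)" where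
  "reg_b \<alpha> F a \<xi> = (\<lambda>g x. \<Sum>h\<in>F. bar_op \<alpha> (a h) (V_op h \<xi>) g x)"

definition pi_a :: "('g::group_add \<Rightarrow> 'w \<Rightarrow> 'w) \<Rightarrow> 'w \<Rightarrow> ('w \<Rightarrow> ('e::real_normed_vector \<Rightarrow>\<^sub>L 'e))
     \<Rightarrow> ('g \<Rightarrow> 'e) \<Rightarrow> ('g \<Rightarrow> 'e)" where
  "pi_a \<alpha> x a \<eta> = (\<lambda>g. blinfun_apply (a (\<alpha> (- g) x)) (\<eta> g))"

definition pi_T :: "'g::group_add \<Rightarrow> ('g \<Rightarrow> 'e) \<Rightarrow> ('g \<Rightarrow> 'e)" where
  "pi_T g0 \<eta> = (\<lambda>g. \<eta> (g + g0))"

definition traj_b :: "('g::group_add \<Rightarrow> 'w \<Rightarrow> 'w) \<Rightarrow> 'g set \<Rightarrow> ('g \<Rightarrow> 'w \<Rightarrow> ('e::real_normed_vector \<Rightarrow>\<^sub>L 'e))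
     \<Rightarrow> 'w \<Rightarrow> ('g \<Rightarrow> 'e) \<Rightarrow> ('g \<Rightarrow> 'e)" where
  "traj_b \<alpha> F a x \<eta> = (\<lambda>g. \<Sum>h\<in>F. pi_a \<alpha> x (a h) (pi_T h \<eta>) g)"

end

theory Submission
  imports Defs
begin

text \<open>By Tonelli, \<open>l\<^sup>p(G, L\<^sup>p(\<Omega>, E))\<close> is \<open>L\<^sup>p(\<Omega>, l\<^sup>p(G, E))\<close>, and in these coordinates
  \<open>(bar b \<xi>)(g)(x) = (b\<^sub>x (\<xi>(\<cdot>)(x)))(g)\<close>: the regular representation acts fibrewise through the
  trajectorial operators. Integrating the pointwise bound \<open>\<parallel>b\<^sub>x\<parallel>\<close> over \<open>\<Omega>\<close> gives
  \<open>\<parallel>bar b\<parallel> \<le> ess sup \<parallel>b\<^sub>x\<parallel>\<close>. Conversely, testing \<open>bar b\<close> on \<open>\<xi> = 1\<^sub>S \<eta>\<close> for all sets \<open>S\<close> of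
  finite positive measure shows \<open>\<parallel>b\<^sub>x \<eta>\<parallel> \<le> \<parallel>bar b\<parallel> \<parallel>\<eta>\<parallel>\<close> for almost every \<open>x\<close>, one
  sequence \<open>\<eta>\<close> at a time. Since \<open>b\<^sub>x\<close> is a finite sum of shifts composed with
  multiplications by bounded operators, its norm is already attained on the countable set of
  finitely supported sequences with values in a countable dense subset of \<open>E\<close>; this makes
  \<open>x \<mapsto> \<parallel>b\<^sub>x\<parallel>\<close> measurable and the exceptional null sets countable in number.\<close>

lemma enn_root_ennreal [simp]: "enn_root p (ennreal x) = ennreal (max 0 x powr (1 / p))"
  by (cases "0 \<le> x") (auto simp: enn_root_def ennreal_neg max_def)

lemma enn_root_top [simp]: "enn_root p \<top> = \<top>"
  by (simp add: enn_root_def)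

lemma enn_root_zero [simp]: "enn_root p 0 = 0"
  by (simp add: enn_root_def)

lemma enn_root_eq_0_iff [simp]: "enn_root p X = 0 \<longleftrightarrow> X = 0"
  by (cases X) (auto simp: enn_root_def)

lemma enn_root_eq_top_iff [simp]: "enn_root p X = \<top> \<longleftrightarrow> X = \<top>"
  by (cases X) (auto simp: enn_root_def)

lemma enn_root_le_iff:
  assumes "0 < p"
  shows "enn_root p X \<le> enn_root p Y \<longleftrightarrow> X \<le> Y"
proof (cases X; cases Y)
  fix x y assume "X = ennreal x" "0 \<le> x" "Y = ennreal y" "0 \<le> y"
  moreover have "x powr (1 / p) \<le> y powr (1 / p) \<longleftrightarrow> x \<le> y"
    using \<open>0 \<le> x\<close> \<open>0 \<le> y\<close> assms powr_mono2[of "1 / p" x y] powr_less_mono2[of "1 / p" y x]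
    by force
  ultimately show ?thesis
    by simp
qed (auto simp: enn_root_def top_unique)

lemma enn_root_ennreal_powr_mult:
  assumes "0 < p" "0 \<le> k"
  shows "enn_root p (ennreal (k powr p) * Y) = ennreal k * enn_root p Y"
proof (cases Y)
  case (real y)
  then show ?thesis
    using assms by (simp add: ennreal_mult[symmetric] powr_mult powr_powr)
next
  case top
  then show ?thesis
    using assms by (cases "k = 0") (auto simp: ennreal_mult_top)
qed

lemma enn_root_le_mult_iff:
  assumes "0 < p" "0 \<le> k"
  shows "enn_root p X \<le> ennreal k * enn_root p Y \<longleftrightarrow> X \<le> ennreal (k powr p) * Y"
  using assms by (simp add: enn_root_ennreal_powr_mult[symmetric] enn_root_le_iff)

lemma borel_measurable_enn_root [measurable]:
  assumes [measurable]: "f \<in> borel_measurable M"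
  shows "(\<lambda>x. enn_root p (f x)) \<in> borel_measurable M"
  unfolding enn_root_def by measurable

lemma Lp_pow_scaleR:
  assumes "f \<in> borel_measurable M"
  shows "Lp_pow M p (\<lambda>x. c *\<^sub>R f x) = ennreal (\<bar>c\<bar> powr p) * Lp_pow M p f"
  unfolding Lp_pow_def using assms
  by (simp add: powr_mult ennreal_mult nn_integral_cmult[symmetric])

lemma lp_pow_eq_Lp_pow: "lp_pow p \<eta> = Lp_pow (count_space UNIV) p \<eta>"
  by (simp add: lp_pow_def Lp_pow_def)

lemma lp_pow_scaleR: "lp_pow p (\<lambda>g. c *\<^sub>R \<eta> g) = ennreal (\<bar>c\<bar> powr p) * lp_pow p \<eta>"
  by (simp add: lp_pow_eq_Lp_pow Lp_pow_scaleR)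

lemma lp_norm_scaleR:
  assumes "0 < p"
  shows "lp_norm p (\<lambda>g. c *\<^sub>R \<eta> g) = ennreal \<bar>c\<bar> * lp_norm p \<eta>"
  using assms by (simp add: lp_norm_def lp_pow_scaleR enn_root_ennreal_powr_mult)

lemma H_pow_scaleR:
  assumes "\<And>g. \<xi> g \<in> borel_measurable M"
  shows "H_pow M p (\<lambda>g x. c *\<^sub>R \<xi> g x) = ennreal (\<bar>c\<bar> powr p) * H_pow M p \<xi>"
  using assms by (simp add: H_pow_def Lp_pow_scaleR nn_integral_cmult)

lemma H_norm_scaleR:
  assumes "0 < p" "\<And>g. \<xi> g \<in> borel_measurable M"
  shows "H_norm M p (\<lambda>g x. c *\<^sub>R \<xi> g x) = ennreal \<bar>c\<bar> * H_norm M p \<xi>"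
  using assms by (simp add: H_norm_def H_pow_scaleR enn_root_ennreal_powr_mult)

lemma lp_pow_eq_0_iff:
  assumes "0 < p"
  shows "lp_pow p \<eta> = 0 \<longleftrightarrow> \<eta> = (\<lambda>g. 0)"
proof -
  have "lp_pow p \<eta> = 0 \<longleftrightarrow> (AE g in count_space UNIV. ennreal (norm (\<eta> g) powr p) = 0)"
    unfolding lp_pow_def by (rule nn_integral_0_iff_AE) simp
  then show ?thesis
    using assms by (simp add: AE_count_space fun_eq_iff)
qed

lemma lp_pow_finite_support:
  assumes "finite P" "\<And>g. g \<notin> P \<Longrightarrow> \<eta> g = 0"
  shows "lp_pow p \<eta> = ennreal (\<Sum>g\<in>P. norm (\<eta> g) powr p)"
proof -
  have "lp_pow p \<eta> = (\<Sum>g\<in>P. ennreal (norm (\<eta> g) powr p))"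
    unfolding lp_pow_def using assms by (intro nn_integral_count_space') auto
  then show ?thesis by simp
qed

lemma sum_le_lp_pow:
  assumes "finite J"
  shows "(\<Sum>g\<in>J. ennreal (norm (\<eta> g) powr p)) \<le> lp_pow p \<eta>"
proof -
  have "(\<Sum>g\<in>J. ennreal (norm (\<eta> g) powr p))
      = (\<integral>\<^sup>+ g. ennreal (norm (\<eta> g) powr p) * indicator J g \<partial>count_space UNIV)"
    using assms by (subst nn_integral_count_space'[of J]) auto
  also have "\<dots> \<le> lp_pow p \<eta>"
    unfolding lp_pow_def by (intro nn_integral_mono) (simp add: indicator_def)
  finally show ?thesis .
qed

lemma nn_integral_count_space_le_finite_sums:
  fixes f :: "'i::countable \<Rightarrow> ennreal"
  assumes "\<And>J. finite J \<Longrightarrow> sum f J \<le> C"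
  shows "(\<integral>\<^sup>+ i. f i \<partial>count_space UNIV) \<le> C"
proof (cases "finite (UNIV :: 'i set)")
  case True
  then show ?thesis
    using assms by (simp add: nn_integral_count_space_finite)
next
  case False
  define e where "e = from_nat_into (UNIV :: 'i set)"
  have e: "bij e"
    using bij_betw_from_nat_into[OF countableI_type False] by (simp add: e_def)
  have "(\<integral>\<^sup>+ i. f i \<partial>count_space UNIV) = (\<Sum>n. f (e n))"
    using e by (simp add: nn_integral_bij_count_space[symmetric] nn_integral_count_space_nat)
  also have "\<dots> = (SUP n. sum f (e ` {..<n}))"
    using e by (simp add: suminf_eq_SUP sum.reindex inj_on_subset[OF bij_is_inj])
  also have "\<dots> \<le> C"
    by (intro SUP_least assms) simp
  finally show ?thesis .
qed

lemma borel_measurable_nn_integral_count_space: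
  fixes f :: "'i::countable \<Rightarrow> 'w \<Rightarrow> ennreal"
  assumes "\<And>i. f i \<in> borel_measurable M"
  shows "(\<lambda>x. \<integral>\<^sup>+ i. f i x \<partial>count_space UNIV) \<in> borel_measurable M"
proof (cases "finite (UNIV :: 'i set)")
  case True
  then show ?thesis
    using assms by (simp add: nn_integral_count_space_finite)
next
  case False
  have e: "bij (from_nat_into (UNIV :: 'i set))"
    using bij_betw_from_nat_into[OF countableI_type False] by simp
  show ?thesis
    using assms e by (simp add: nn_integral_bij_count_space[symmetric] nn_integral_count_space_nat)
qed

lemma borel_measurable_lp_pow:
  fixes \<xi> :: "'g::countable \<Rightarrow> 'w \<Rightarrow> 'e::real_normed_vector"
  assumes "\<And>g. \<xi> g \<in> borel_measurable M"
  shows "(\<lambda>x. lp_pow p (\<lambda>g. \<xi> g x)) \<in> borel_measurable M"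
  unfolding lp_pow_def using assms by (intro borel_measurable_nn_integral_count_space) measurable

lemma H_pow_eq_nn_integral_lp_pow:
  fixes \<xi> :: "'g::countable \<Rightarrow> 'w \<Rightarrow> 'e::real_normed_vector"
  assumes "\<And>g. \<xi> g \<in> borel_measurable M"
  shows "H_pow M p \<xi> = (\<integral>\<^sup>+ x. lp_pow p (\<lambda>g. \<xi> g x) \<partial>M)"
  unfolding H_pow_def Lp_pow_def lp_pow_def using assms
  by (intro nn_integral_count_space_nn_integral[symmetric]) measurable

lemma op_norm_upper: "x \<in> X \<Longrightarrow> N x \<le> 1 \<Longrightarrow> N' (T x) \<le> op_norm X N T N'"
  unfolding op_norm_def by (rule Sup_upper) auto

lemma op_norm_least: "(\<And>x. x \<in> X \<Longrightarrow> N x \<le> 1 \<Longrightarrow> N' (T x) \<le> C) \<Longrightarrow> op_norm X N T N' \<le> C"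
  unfolding op_norm_def by (rule Sup_least) auto

lemma op_norm_le_if_bound:
  assumes "\<And>x. x \<in> X \<Longrightarrow> N' (T x) \<le> C * N x"
  shows "op_norm X N T N' \<le> C"
proof (rule op_norm_least)
  fix x assume "x \<in> X" "N x \<le> 1"
  then have "N' (T x) \<le> C * 1"
    using assms[OF \<open>x \<in> X\<close>] mult_left_mono[of "N x" 1 C] by (metis order_trans zero_le)
  then show "N' (T x) \<le> C" by simp
qed

text \<open>\<open>scale\<close> and \<open>scale'\<close> are the actions of positive reals on the two spaces: the sequence
  spaces here are function spaces, which carry no \<open>real_vector\<close> instance.\<close>

lemma norm_apply_le_op_norm_mult:
  fixes scale :: "real \<Rightarrow> 'x \<Rightarrow> 'x" and scale' :: "real \<Rightarrow> 'y \<Rightarrow> 'y"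
  assumes x: "x \<in> X" "0 < N x" "N x < \<top>"
    and scale_closed: "\<And>c x. 0 < c \<Longrightarrow> x \<in> X \<Longrightarrow> scale c x \<in> X"
    and N_scale: "\<And>c x. 0 < c \<Longrightarrow> x \<in> X \<Longrightarrow> N (scale c x) = ennreal c * N x"
    and T_scale: "\<And>c x. 0 < c \<Longrightarrow> x \<in> X \<Longrightarrow> T (scale c x) = scale' c (T x)"
    and N'_scale: "\<And>c x. 0 < c \<Longrightarrow> x \<in> X \<Longrightarrow> N' (scale' c (T x)) = ennreal c * N' (T x)"
  shows "N' (T x) \<le> op_norm X N T N' * N x"
proof -
  obtain r where r: "N x = ennreal r" "0 < r"
    using x(2,3) by (cases "N x") auto
  let ?x = "scale (1 / r) x"
  have "N ?x = ennreal (1 / r) * ennreal r"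
    using r x(1) N_scale by simp
  also have "\<dots> = 1"
    using r by (simp flip: ennreal_mult)
  finally have "N' (T ?x) \<le> op_norm X N T N'"
    using r x(1) scale_closed by (intro op_norm_upper) auto
  moreover have "N' (T x) = ennreal r * N' (T ?x)"
    using r x(1) T_scale N'_scale by (simp add: ennreal_mult[symmetric] flip: mult.assoc)
  ultimately show ?thesis
    using r by (simp add: mult.commute mult_left_mono)
qed

lemma lp_norm_apply_le_op_norm_mult:
  fixes T :: "('g \<Rightarrow> 'e::real_normed_vector) \<Rightarrow> ('g \<Rightarrow> 'f::real_normed_vector)"
  assumes p: "0 < p"
    and T_scale: "\<And>c \<eta>. T (\<lambda>g. c *\<^sub>R \<eta> g) = (\<lambda>g. c *\<^sub>R T \<eta> g)"
    and \<eta>: "\<eta> \<in> lpspace p"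
  shows "lp_norm p (T \<eta>) \<le> op_norm (lpspace p) (lp_norm p) T (lp_norm p) * lp_norm p \<eta>"
proof (cases "\<eta> = (\<lambda>g. 0)")
  case True
  then have "T \<eta> = (\<lambda>g. 0)"
    using T_scale[of 0 \<eta>] by simp
  then show ?thesis
    by (simp add: lp_norm_def lp_pow_def)
next
  case False
  then have "0 < lp_norm p \<eta>"
    using p by (simp add: lp_norm_def lp_pow_eq_0_iff zero_less_iff_neq_zero)
  moreover have "lp_norm p \<eta> < \<top>"
    using \<eta> by (simp add: lp_norm_def lpspace_def less_top[symmetric])
  ultimately show ?thesis
    using \<eta> p T_scale
    by (intro norm_apply_le_op_norm_mult[where scale = "\<lambda>c \<eta> g. c *\<^sub>R \<eta> g"])
       (auto simp: lpspace_def lp_pow_scaleR lp_norm_scaleR ennreal_mult_less_top)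
qed

lemma lp_pow_apply_le_of_op_norm_le:
  fixes T :: "('g \<Rightarrow> 'e::real_normed_vector) \<Rightarrow> ('g \<Rightarrow> 'f::real_normed_vector)"
  assumes p: "0 < p"
    and T_scale: "\<And>c \<eta>. T (\<lambda>g. c *\<^sub>R \<eta> g) = (\<lambda>g. c *\<^sub>R T \<eta> g)"
    and \<eta>: "\<eta> \<in> lpspace p"
    and s: "op_norm (lpspace p) (lp_norm p) T (lp_norm p) \<le> ennreal s" "0 \<le> s"
  shows "lp_pow p (T \<eta>) \<le> ennreal (s powr p) * lp_pow p \<eta>"
proof -
  have "lp_norm p (T \<eta>) \<le> op_norm (lpspace p) (lp_norm p) T (lp_norm p) * lp_norm p \<eta>"
    using p T_scale \<eta> by (rule lp_norm_apply_le_op_norm_mult)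
  also have "\<dots> \<le> ennreal s * lp_norm p \<eta>"
    using s(1) by (rule mult_right_mono) simp
  finally show ?thesis
    using p s(2) by (simp add: lp_norm_def enn_root_le_mult_iff)
qed

lemma AE_fibre_in_lpspace:
  fixes \<xi> :: "'g::countable \<Rightarrow> 'w \<Rightarrow> 'e::real_normed_vector"
  assumes \<xi>: "\<xi> \<in> Hspace M p"
  shows "AE x in M. (\<lambda>g. \<xi> g x) \<in> lpspace p"
proof -
  have \<xi>_meas: "\<And>g. \<xi> g \<in> borel_measurable M"
    using \<xi> by (simp add: Hspace_def Dspace_def)
  have "AE x in M. lp_pow p (\<lambda>g. \<xi> g x) \<noteq> \<infinity>"
  proof (rule nn_integral_noteq_infinite)
    show "(\<lambda>x. lp_pow p (\<lambda>g. \<xi> g x)) \<in> borel_measurable M"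
      using \<xi>_meas by (rule borel_measurable_lp_pow)
    show "(\<integral>\<^sup>+ x. lp_pow p (\<lambda>g. \<xi> g x) \<partial>M) \<noteq> \<infinity>"
      using \<xi> by (simp add: Hspace_def H_pow_eq_nn_integral_lp_pow[OF \<xi>_meas, symmetric] less_top)
  qed
  then show ?thesis
    by (simp add: lpspace_def less_top)
qed

lemma traj_b_apply: "traj_b \<alpha> F a x \<eta> g = (\<Sum>h\<in>F. a h (\<alpha> (- g) x) (\<eta> (g + h)))"
  by (simp add: traj_b_def pi_a_def pi_T_def)

lemma traj_b_scaleR: "traj_b \<alpha> F a x (\<lambda>g. c *\<^sub>R \<eta> g) = (\<lambda>g. c *\<^sub>R traj_b \<alpha> F a x \<eta> g)"
  by (simp add: fun_eq_iff traj_b_apply blinfun.scaleR_right scaleR_sum_right)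

lemma traj_b_zero [simp]: "traj_b \<alpha> F a x (\<lambda>g. 0) = (\<lambda>g. 0)"
  by (simp add: traj_b_apply fun_eq_iff)

lemma reg_b_eq_traj_b: "reg_b \<alpha> F a \<xi> g x = traj_b \<alpha> F a x (\<lambda>h. \<xi> h x) g"
  by (simp add: reg_b_def traj_b_def bar_op_def hatT_def V_op_def pi_a_def pi_T_def)

lemma borel_measurable_blinfun_apply_strong:
  fixes A :: "'w \<Rightarrow> ('e::{banach, second_countable_topology}
    \<Rightarrow>\<^sub>L 'f::{banach, second_countable_topology})"
  assumes A: "\<And>e. (\<lambda>x. A x e) \<in> borel_measurable M"
    and f: "f \<in> borel_measurable M"
  shows "(\<lambda>x. A x (f x)) \<in> borel_measurable M"
proof -
  obtain s where s: "\<And>i. simple_function M (s i)" "\<And>x. x \<in> space M \<Longrightarrow> (\<lambda>i. s i x) \<longlonglongrightarrow> f x"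
    using borel_measurable_implies_sequence_metric[OF f, of 0] by blast
  have "(\<lambda>x. A x (s i x)) \<in> borel_measurable M" for i
  proof -
    have "(\<lambda>x. \<Sum>e\<in>s i ` space M. indicator (s i -` {e} \<inter> space M) x *\<^sub>R A x e) \<in> borel_measurable M"
      using simple_functionD(2)[OF s(1)] A
      by (intro borel_measurable_sum borel_measurable_scaleR borel_measurable_indicator) auto
    moreover have "(\<Sum>e\<in>s i ` space M. indicator (s i -` {e} \<inter> space M) x *\<^sub>R A x e) = A x (s i x)"
      if "x \<in> space M" for x
    proof -
      have "(\<Sum>e\<in>s i ` space M. indicator (s i -` {e} \<inter> space M) x *\<^sub>R A x e)
          = (\<Sum>e\<in>s i ` space M. if e = s i x then A x e else 0)"
        using that by (intro sum.cong) (auto simp: indicator_def)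
      then show ?thesis
        using that simple_functionD(1)[OF s(1)] by (simp add: sum.delta')
    qed
    ultimately show ?thesis
      by (rule measurable_cong[THEN iffD1, rotated]) simp
  qed
  then show ?thesis
    by (rule borel_measurable_LIMSEQ_metric) (auto intro!: tendsto_intros s(2))
qed

lemma borel_measurable_reg_b:
  fixes a :: "'g::group_add \<Rightarrow> 'w \<Rightarrow> ('e::{banach, second_countable_topology} \<Rightarrow>\<^sub>L 'e)"
  assumes "\<And>g. \<alpha> g \<in> measurable M M" "\<And>h. h \<in> F \<Longrightarrow> a h \<in> Linf_op M"
    and "\<And>g. \<xi> g \<in> borel_measurable M"
  shows "(\<lambda>x. reg_b \<alpha> F a \<xi> g x) \<in> borel_measurable M"
proof -
  have "(\<lambda>x. a h (\<alpha> (- g) x) (\<xi> (g + h) x)) \<in> borel_measurable M" if "h \<in> F" for h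
  proof (rule borel_measurable_blinfun_apply_strong)
    show "(\<lambda>x. a h (\<alpha> (- g) x) e) \<in> borel_measurable M" for e
      using assms(2)[OF that] by (intro measurable_compose[OF assms(1)]) (simp add: Linf_op_def)
  qed (rule assms(3))
  then show ?thesis
    by (simp add: reg_b_eq_traj_b traj_b_apply borel_measurable_sum)
qed

lemma borel_measurable_traj_b:
  fixes a :: "'g::group_add \<Rightarrow> 'w \<Rightarrow> ('e::{banach, second_countable_topology} \<Rightarrow>\<^sub>L 'e)"
  assumes "\<And>g. \<alpha> g \<in> measurable M M" "\<And>h. h \<in> F \<Longrightarrow> a h \<in> Linf_op M"
  shows "(\<lambda>x. traj_b \<alpha> F a x \<eta> g) \<in> borel_measurable M"
  using borel_measurable_reg_b[OF assms, where \<xi> = "\<lambda>g x. \<eta> g" and g = g]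
  by (simp add: reg_b_eq_traj_b)

lemma H_norm_reg_b_le_op_norm_mult:
  fixes \<xi> :: "'g::{group_add, countable} \<Rightarrow> 'w \<Rightarrow> 'e::{banach, second_countable_topology}"
  assumes p: "0 < p" and \<xi>: "\<xi> \<in> Hspace M p" "0 < H_norm M p \<xi>"
    and \<alpha>: "\<And>g. \<alpha> g \<in> measurable M M" and a: "\<And>h. h \<in> F \<Longrightarrow> a h \<in> Linf_op M"
  shows "H_norm M p (reg_b \<alpha> F a \<xi>)
       \<le> op_norm (Hspace M p) (H_norm M p) (reg_b \<alpha> F a) (H_norm M p) * H_norm M p \<xi>"
proof (rule norm_apply_le_op_norm_mult[where scale = "\<lambda>c \<xi> g x. c *\<^sub>R \<xi> g x"])
  show "H_norm M p \<xi> < \<top>"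
    using \<xi>(1) by (simp add: H_norm_def Hspace_def less_top[symmetric])
  show "(\<lambda>g x. c *\<^sub>R \<zeta> g x) \<in> Hspace M p" if "0 < c" "\<zeta> \<in> Hspace M p" for c \<zeta>
  proof -
    have [measurable]: "\<zeta> g \<in> borel_measurable M" for g
      using that(2) by (simp add: Hspace_def Dspace_def)
    show ?thesis
      using that
      by (auto simp: Hspace_def Dspace_def Lp_pow_scaleR H_pow_scaleR ennreal_mult_less_top)
  qed
  show "H_norm M p (\<lambda>g x. c *\<^sub>R \<zeta> g x) = ennreal c * H_norm M p \<zeta>"
    if "0 < c" "\<zeta> \<in> Hspace M p" for c \<zeta>
    using that p by (simp add: Hspace_def Dspace_def H_norm_scaleR)
  show "reg_b \<alpha> F a (\<lambda>g x. c *\<^sub>R \<zeta> g x) = (\<lambda>g x. c *\<^sub>R reg_b \<alpha> F a \<zeta> g x)" for c \<zeta>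
    by (simp add: fun_eq_iff reg_b_eq_traj_b traj_b_scaleR)
  show "H_norm M p (\<lambda>g x. c *\<^sub>R reg_b \<alpha> F a \<zeta> g x) = ennreal c * H_norm M p (reg_b \<alpha> F a \<zeta>)"
    if "0 < c" "\<zeta> \<in> Hspace M p" for c \<zeta>
  proof -
    have "\<zeta> g \<in> borel_measurable M" for g
      using that(2) by (simp add: Hspace_def Dspace_def)
    then have "(\<lambda>x. reg_b \<alpha> F a \<zeta> g x) \<in> borel_measurable M" for g
      using \<alpha> a by (blast intro: borel_measurable_reg_b)
    then show ?thesis
      using that p by (simp add: H_norm_scaleR)
  qed
qed (use \<xi> in auto)

theorem op_norm_reg_b_le_esssup_traj_b:
  fixes \<alpha> :: "'g::{group_add, countable} \<Rightarrow> 'w \<Rightarrow> 'w"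
    and a :: "'g \<Rightarrow> 'w \<Rightarrow> ('e::{banach, second_countable_topology} \<Rightarrow>\<^sub>L 'e)"
  assumes p: "0 < p" and \<alpha>: "\<And>g. \<alpha> g \<in> measurable M M" and a: "\<And>h. h \<in> F \<Longrightarrow> a h \<in> Linf_op M"
  shows "op_norm (Hspace M p) (H_norm M p) (reg_b \<alpha> F a) (H_norm M p)
       \<le> esssup M (\<lambda>x. op_norm (lpspace p) (lp_norm p) (traj_b \<alpha> F a x) (lp_norm p))"
    (is "_ \<le> esssup M ?N")
proof (cases "esssup M ?N = \<top>")
  case False
  then obtain s where s: "esssup M ?N = ennreal s" "0 \<le> s"
    by (cases "esssup M ?N") auto
  show ?thesis
  proof (rule op_norm_le_if_bound)
    fix \<xi> :: "'g \<Rightarrow> 'w \<Rightarrow> 'e" assume \<xi>: "\<xi> \<in> Hspace M p"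
    have \<xi>_meas: "\<And>g. \<xi> g \<in> borel_measurable M"
      using \<xi> by (simp add: Hspace_def Dspace_def)
    have AE_bound: "AE x in M. lp_pow p (traj_b \<alpha> F a x (\<lambda>g. \<xi> g x))
        \<le> ennreal (s powr p) * lp_pow p (\<lambda>g. \<xi> g x)"
      using AE_fibre_in_lpspace[OF \<xi>] esssup_AE[of ?N M]
      by eventually_elim (rule lp_pow_apply_le_of_op_norm_le[OF p traj_b_scaleR], simp_all add: s)
    have reg_meas: "\<And>g. (\<lambda>x. reg_b \<alpha> F a \<xi> g x) \<in> borel_measurable M"
      using \<alpha> a \<xi>_meas by (blast intro: borel_measurable_reg_b)
    have "H_pow M p (reg_b \<alpha> F a \<xi>) = (\<integral>\<^sup>+ x. lp_pow p (\<lambda>g. reg_b \<alpha> F a \<xi> g x) \<partial>M)"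
      by (rule H_pow_eq_nn_integral_lp_pow[OF reg_meas])
    also have "\<dots> = (\<integral>\<^sup>+ x. lp_pow p (traj_b \<alpha> F a x (\<lambda>g. \<xi> g x)) \<partial>M)"
      by (simp add: reg_b_eq_traj_b)
    also have "\<dots> \<le> (\<integral>\<^sup>+ x. ennreal (s powr p) * lp_pow p (\<lambda>g. \<xi> g x) \<partial>M)"
      using AE_bound by (rule nn_integral_mono_AE)
    also have "\<dots> = ennreal (s powr p) * H_pow M p \<xi>"
      using \<xi>_meas
      by (simp add: nn_integral_cmult borel_measurable_lp_pow H_pow_eq_nn_integral_lp_pow)
    finally have "H_pow M p (reg_b \<alpha> F a \<xi>) \<le> ennreal (s powr p) * H_pow M p \<xi>" .
    then show "H_norm M p (reg_b \<alpha> F a \<xi>) \<le> esssup M ?N * H_norm M p \<xi>"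
      using p s by (simp add: H_norm_def enn_root_le_mult_iff)
  qed
qed simp

definition fin_supp_seqs :: "'e::zero set \<Rightarrow> ('g \<Rightarrow> 'e) set" where
  "fin_supp_seqs Q = {\<eta>. finite {g. \<eta> g \<noteq> 0} \<and> (\<forall>g. \<eta> g \<noteq> 0 \<longrightarrow> \<eta> g \<in> Q)}"

lemma countable_fin_supp_seqs:
  assumes "countable Q"
  shows "countable (fin_supp_seqs Q :: ('g::countable \<Rightarrow> 'e::zero) set)"
proof -
  let ?seq = "\<lambda>xs (g :: 'g). case map_of xs g of None \<Rightarrow> 0 | Some q \<Rightarrow> q"
  have "(fin_supp_seqs Q :: ('g \<Rightarrow> 'e) set) \<subseteq> ?seq ` lists (UNIV \<times> Q)"
  proof
    fix \<eta> :: "'g \<Rightarrow> 'e" assume "\<eta> \<in> fin_supp_seqs Q"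
    then obtain gs where gs: "set gs = {g. \<eta> g \<noteq> 0}" "\<forall>g. \<eta> g \<noteq> 0 \<longrightarrow> \<eta> g \<in> Q"
      unfolding fin_supp_seqs_def using finite_list by blast
    then have "zip gs (map \<eta> gs) \<in> lists (UNIV \<times> Q)"
      using nth_mem by (fastforce simp: set_zip)
    moreover have "\<eta> = ?seq (zip gs (map \<eta> gs))"
      using gs by (auto simp: map_of_zip_map fun_eq_iff)
    ultimately show "\<eta> \<in> ?seq ` lists (UNIV \<times> Q)"
      by blast
  qed
  moreover have "countable (?seq ` lists (UNIV \<times> Q))"
    using assms by (intro countable_image countable_lists countable_SIGMA) auto
  ultimately show ?thesis
    by (rule countable_subset)
qed

lemma lp_pow_fin_supp_seqs_less_top: "\<eta> \<in> fin_supp_seqs Q \<Longrightarrow> lp_pow p \<eta> < \<top>"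
  unfolding fin_supp_seqs_def by (subst lp_pow_finite_support[of "{g. \<eta> g \<noteq> 0}"]) auto

lemma fin_supp_seqs_approx:
  fixes \<eta> :: "'g \<Rightarrow> 'e::real_normed_vector"
  assumes Q: "closure Q = UNIV" and P: "finite P"
  obtains s where "\<And>n. s n \<in> fin_supp_seqs Q" "\<And>n q. q \<notin> P \<Longrightarrow> s n q = 0"
    "\<And>q. q \<in> P \<Longrightarrow> (\<lambda>n. s n q) \<longlonglongrightarrow> \<eta> q"
proof -
  have "\<forall>q. \<exists>t. (\<forall>n. t n \<in> Q) \<and> t \<longlonglongrightarrow> \<eta> q"
    using Q closure_sequential[of _ Q] by auto
  then obtain t where t: "\<And>q n. t q n \<in> Q" "\<And>q. t q \<longlonglongrightarrow> \<eta> q"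
    by metis
  show ?thesis
  proof (rule that[of "\<lambda>n q. if q \<in> P then t q n else 0"])
    show "(\<lambda>q. if q \<in> P then t q n else 0) \<in> fin_supp_seqs Q" for n
      using P t(1) by (auto simp: fin_supp_seqs_def elim: finite_subset[rotated])
  qed (simp_all add: t(2))
qed

text \<open>On \<open>J\<close>, \<open>b\<^sub>x \<eta>\<close> depends continuously on the finitely many values of \<open>\<eta>\<close> on \<open>J + F\<close>,
  so \<open>\<eta>\<close> may be replaced there by finitely supported approximations with values in \<open>Q\<close>.\<close>

lemma sum_norm_powr_traj_b_le_of_dense:
  fixes a :: "'g::group_add \<Rightarrow> 'w \<Rightarrow> ('e::real_normed_vector \<Rightarrow>\<^sub>L 'e)"
  assumes F: "finite F" and J: "finite J" and p: "0 < p" and c: "0 \<le> c"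
    and Q: "closure Q = UNIV"
    and bound: "\<And>\<zeta>. \<zeta> \<in> fin_supp_seqs Q \<Longrightarrow> lp_pow p (traj_b \<alpha> F a x \<zeta>) \<le> ennreal c * lp_pow p \<zeta>"
  shows "(\<Sum>g\<in>J. norm (traj_b \<alpha> F a x \<eta> g) powr p)
       \<le> c * (\<Sum>q\<in>(\<lambda>(g, h). g + h) ` (J \<times> F). norm (\<eta> q) powr p)"
proof -
  define P where "P = (\<lambda>(g, h). g + h) ` (J \<times> F)"
  have P: "finite P" "\<And>g h. g \<in> J \<Longrightarrow> h \<in> F \<Longrightarrow> g + h \<in> P"
    using F J by (auto simp: P_def)
  obtain s where s: "\<And>n. s n \<in> fin_supp_seqs Q" "\<And>n q. q \<notin> P \<Longrightarrow> s n q = 0"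
    "\<And>q. q \<in> P \<Longrightarrow> (\<lambda>n. s n q) \<longlonglongrightarrow> \<eta> q"
    using fin_supp_seqs_approx[OF Q P(1)] by blast
  have le_n: "(\<Sum>g\<in>J. norm (traj_b \<alpha> F a x (s n) g) powr p) \<le> c * (\<Sum>q\<in>P. norm (s n q) powr p)" for n
  proof -
    have "ennreal (\<Sum>g\<in>J. norm (traj_b \<alpha> F a x (s n) g) powr p) \<le> lp_pow p (traj_b \<alpha> F a x (s n))"
      using sum_le_lp_pow[OF J] by simp
    also have "\<dots> \<le> ennreal c * lp_pow p (s n)"
      using s(1) by (rule bound)
    also have "lp_pow p (s n) = ennreal (\<Sum>q\<in>P. norm (s n q) powr p)"
      using P(1) s(2) by (rule lp_pow_finite_support)
    finally show ?thesis
      using c by (simp add: ennreal_mult[symmetric] sum_nonneg)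
  qed
  have "(\<lambda>n. traj_b \<alpha> F a x (s n) g) \<longlonglongrightarrow> traj_b \<alpha> F a x \<eta> g" if "g \<in> J" for g
    unfolding traj_b_apply using that by (auto intro!: tendsto_intros s(3) P(2))
  then have "(\<lambda>n. \<Sum>g\<in>J. norm (traj_b \<alpha> F a x (s n) g) powr p)
      \<longlonglongrightarrow> (\<Sum>g\<in>J. norm (traj_b \<alpha> F a x \<eta> g) powr p)"
    using p by (intro tendsto_sum tendsto_powr' tendsto_norm) auto
  moreover have "(\<lambda>n. c * (\<Sum>q\<in>P. norm (s n q) powr p)) \<longlonglongrightarrow> c * (\<Sum>q\<in>P. norm (\<eta> q) powr p)"
    using p by (intro tendsto_intros tendsto_powr' s(3)) auto
  ultimately show ?thesis
    unfolding P_def[symmetric] by (rule LIMSEQ_le) (use le_n in auto)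
qed

lemma lp_pow_traj_b_le_of_dense:
  fixes a :: "'g::{group_add, countable} \<Rightarrow> 'w \<Rightarrow> ('e::real_normed_vector \<Rightarrow>\<^sub>L 'e)"
  assumes F: "finite F" and p: "0 < p" and c: "0 \<le> c" and Q: "closure Q = UNIV"
    and bound: "\<And>\<zeta>. \<zeta> \<in> fin_supp_seqs Q \<Longrightarrow> lp_pow p (traj_b \<alpha> F a x \<zeta>) \<le> ennreal c * lp_pow p \<zeta>"
  shows "lp_pow p (traj_b \<alpha> F a x \<eta>) \<le> ennreal c * lp_pow p \<eta>"
  unfolding lp_pow_def[of p "traj_b \<alpha> F a x \<eta>"]
proof (rule nn_integral_count_space_le_finite_sums)
  fix J :: "'g set" assume J: "finite J"
  let ?P = "(\<lambda>(g, h). g + h) ` (J \<times> F)"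
  have "(\<Sum>g\<in>J. ennreal (norm (traj_b \<alpha> F a x \<eta> g) powr p))
      \<le> ennreal (c * (\<Sum>q\<in>?P. norm (\<eta> q) powr p))"
    using sum_norm_powr_traj_b_le_of_dense[OF F J p c Q bound] by (simp add: ennreal_leI)
  also have "\<dots> = ennreal c * (\<Sum>q\<in>?P. ennreal (norm (\<eta> q) powr p))"
    using c by (simp add: ennreal_mult sum_nonneg)
  also have "\<dots> \<le> ennreal c * lp_pow p \<eta>"
    using F J by (intro mult_left_mono sum_le_lp_pow) auto
  finally show "(\<Sum>g\<in>J. ennreal (norm (traj_b \<alpha> F a x \<eta> g) powr p)) \<le> ennreal c * lp_pow p \<eta>" .
qed

text \<open>For \<open>\<eta> = 0\<close> the quotient is \<open>0 / 0\<close>, which is \<open>0\<close> in \<open>ennreal\<close>.\<close>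

lemma lp_norm_traj_b_divide_le_iff:
  assumes p: "0 < p" and \<eta>: "lp_pow p \<eta> < \<top>"
  shows "lp_norm p (traj_b \<alpha> F a x \<eta>) / lp_norm p \<eta> \<le> K
     \<longleftrightarrow> lp_norm p (traj_b \<alpha> F a x \<eta>) \<le> K * lp_norm p \<eta>"
proof (cases "\<eta> = (\<lambda>g. 0)")
  case True
  then show ?thesis
    by (simp add: lp_norm_def lp_pow_def)
next
  case False
  then have y: "0 < lp_norm p \<eta>" "lp_norm p \<eta> < \<top>"
    using p \<eta>
    by (simp_all add: lp_norm_def lp_pow_eq_0_iff zero_less_iff_neq_zero less_top[symmetric])
  show ?thesis
  proof
    assume "lp_norm p (traj_b \<alpha> F a x \<eta>) / lp_norm p \<eta> \<le> K"
    then have "lp_norm p (traj_b \<alpha> F a x \<eta>) / lp_norm p \<eta> * lp_norm p \<eta> \<le> K * lp_norm p \<eta>"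
      by (rule mult_right_mono) simp
    then show "lp_norm p (traj_b \<alpha> F a x \<eta>) \<le> K * lp_norm p \<eta>"
      using y by (simp add: ennreal_divide_times)
  next
    assume "lp_norm p (traj_b \<alpha> F a x \<eta>) \<le> K * lp_norm p \<eta>"
    then show "lp_norm p (traj_b \<alpha> F a x \<eta>) / lp_norm p \<eta> \<le> K"
      using y(1) by (intro divide_le_posI_ennreal) (simp_all add: mult.commute)
  qed
qed

lemma op_norm_traj_b_eq_SUP_fin_supp_seqs:
  fixes a :: "'g::{group_add, countable} \<Rightarrow> 'w \<Rightarrow> ('e::real_normed_vector \<Rightarrow>\<^sub>L 'e)"
  assumes F: "finite F" and p: "0 < p" and Q: "closure Q = UNIV"
  shows "op_norm (lpspace p) (lp_norm p) (traj_b \<alpha> F a x) (lp_norm p)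
       = (SUP \<eta>\<in>fin_supp_seqs Q. lp_norm p (traj_b \<alpha> F a x \<eta>) / lp_norm p \<eta>)"
    (is "?N = ?S")
proof (rule antisym)
  show "?S \<le> ?N"
  proof (rule SUP_least)
    fix \<eta> :: "'g \<Rightarrow> 'e" assume "\<eta> \<in> fin_supp_seqs Q"
    then have "lp_pow p \<eta> < \<top>"
      by (rule lp_pow_fin_supp_seqs_less_top)
    moreover have "lp_norm p (traj_b \<alpha> F a x \<eta>) \<le> ?N * lp_norm p \<eta>"
      using p \<open>lp_pow p \<eta> < \<top>\<close>
      by (intro lp_norm_apply_le_op_norm_mult traj_b_scaleR) (simp_all add: lpspace_def)
    ultimately show "lp_norm p (traj_b \<alpha> F a x \<eta>) / lp_norm p \<eta> \<le> ?N"
      using p by (simp add: lp_norm_traj_b_divide_le_iff)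
  qed
  show "?N \<le> ?S"
  proof (cases "?S = \<top>")
    case False
    then obtain k where k: "?S = ennreal k" "0 \<le> k"
      by (cases ?S) auto
    have "lp_pow p (traj_b \<alpha> F a x \<zeta>) \<le> ennreal (k powr p) * lp_pow p \<zeta>"
      if "\<zeta> \<in> fin_supp_seqs Q" for \<zeta>
    proof -
      have "lp_norm p (traj_b \<alpha> F a x \<zeta>) / lp_norm p \<zeta> \<le> ennreal k"
        using SUP_upper[OF that, of "\<lambda>\<eta>. lp_norm p (traj_b \<alpha> F a x \<eta>) / lp_norm p \<eta>"] k(1)
        by simp
      then have "lp_norm p (traj_b \<alpha> F a x \<zeta>) \<le> ennreal k * lp_norm p \<zeta>"
        using p lp_pow_fin_supp_seqs_less_top[OF that] by (simp add: lp_norm_traj_b_divide_le_iff)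
      then show ?thesis
        using p k(2) by (simp add: lp_norm_def enn_root_le_mult_iff)
    qed
    then have "lp_pow p (traj_b \<alpha> F a x \<eta>) \<le> ennreal (k powr p) * lp_pow p \<eta>" for \<eta>
      by (rule lp_pow_traj_b_le_of_dense[OF F p powr_ge_zero Q])
    then have "lp_norm p (traj_b \<alpha> F a x \<eta>) \<le> ?S * lp_norm p \<eta>" for \<eta>
      using p k by (simp add: lp_norm_def enn_root_le_mult_iff)
    then show ?thesis
      by (blast intro: op_norm_le_if_bound)
  qed (simp only: top_greatest)
qed

lemma ennreal_less_imp_add_inverse_Suc_less:
  assumes "ennreal c < y" "0 \<le> c"
  obtains k where "ennreal (c + 1 / Suc k) < y"
proof (cases y)
  case (real r)
  then have "0 < r - c"
    using assms by (simp add: ennreal_less_iff)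
  then obtain k where "inverse (Suc k) < r - c"
    using reals_Archimedean by blast
  then show ?thesis
    using real assms(2)
    by (intro that[of k]) (simp add: ennreal_less_iff inverse_eq_divide del: ennreal_plus)
next
  case top
  then show ?thesis
    using that[of 0] by simp
qed

lemma emeasure_eq_0_if_set_nn_integral_le:
  assumes B: "B \<in> sets M" "emeasure M B < \<infinity>" and c: "0 \<le> c" and \<delta>: "0 < \<delta>"
    and f: "\<And>x. x \<in> B \<Longrightarrow> ennreal (c + \<delta>) \<le> f x"
    and bound: "0 < emeasure M B \<Longrightarrow> (\<integral>\<^sup>+ x. f x * indicator B x \<partial>M) \<le> ennreal c * emeasure M B"
  shows "emeasure M B = 0"
proof (rule ccontr)
  assume "emeasure M B \<noteq> 0"
  obtain m where m: "emeasure M B = ennreal m" "0 \<le> m"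
    using B(2) by (cases "emeasure M B") auto
  have "ennreal (c + \<delta>) * emeasure M B = (\<integral>\<^sup>+ x. ennreal (c + \<delta>) * indicator B x \<partial>M)"
    using B(1) by (rule nn_integral_cmult_indicator[symmetric])
  also have "\<dots> \<le> (\<integral>\<^sup>+ x. f x * indicator B x \<partial>M)"
    using f by (intro nn_integral_mono) (simp add: indicator_def)
  also have "\<dots> \<le> ennreal c * emeasure M B"
    using \<open>emeasure M B \<noteq> 0\<close> by (intro bound) (simp add: zero_less_iff_neq_zero)
  finally have "(c + \<delta>) * m \<le> c * m"
    using c \<delta> m by (simp add: ennreal_mult[symmetric] ennreal_le_iff del: ennreal_plus)
  then show False
    using \<delta> m \<open>emeasure M B \<noteq> 0\<close> by (simp add: distrib_right mult_le_0_iff)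
qed

lemma (in sigma_finite_measure) AE_le_if_set_nn_integral_le:
  assumes f: "f \<in> borel_measurable M" and c: "0 \<le> c"
    and bound: "\<And>S. S \<in> sets M \<Longrightarrow> 0 < emeasure M S \<Longrightarrow> emeasure M S < \<infinity> \<Longrightarrow>
      (\<integral>\<^sup>+ x. f x * indicator S x \<partial>M) \<le> ennreal c * emeasure M S"
  shows "AE x in M. f x \<le> ennreal c"
proof -
  obtain A :: "nat \<Rightarrow> 'a set"
    where A: "range A \<subseteq> sets M" "(\<Union>i. A i) = space M" "\<And>i. emeasure M (A i) \<noteq> \<infinity>"
    using sigma_finite by metis
  define B where "B k n = {x \<in> space M. ennreal (c + 1 / Suc k) < f x} \<inter> A n" for k n
  have B_null: "B k n \<in> null_sets M" for k n
  proof -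
    have B: "B k n \<in> sets M"
      using A(1) f unfolding B_def by (intro sets.Int) auto
    have "emeasure M (B k n) \<le> emeasure M (A n)"
      using A(1) by (intro emeasure_mono) (auto simp: B_def)
    then have fin: "emeasure M (B k n) < \<infinity>"
      using A(3)[of n] by (simp add: less_top[symmetric] neq_top_trans)
    have "emeasure M (B k n) = 0"
    proof (rule emeasure_eq_0_if_set_nn_integral_le[OF B fin c])
      show "0 < 1 / real (Suc k)"
        by simp
      show "ennreal (c + 1 / Suc k) \<le> f x" if "x \<in> B k n" for x
        using that by (simp add: B_def less_imp_le)
      show "(\<integral>\<^sup>+ x. f x * indicator (B k n) x \<partial>M) \<le> ennreal c * emeasure M (B k n)"
        if "0 < emeasure M (B k n)"
        using B that fin by (rule bound)
    qed
    then show ?thesis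
      using B by auto
  qed
  then have "(\<Union>k. \<Union>n. B k n) \<in> null_sets M"
    by blast
  moreover have "{x \<in> space M. \<not> f x \<le> ennreal c} \<subseteq> (\<Union>k. \<Union>n. B k n)"
  proof
    fix x assume x: "x \<in> {x \<in> space M. \<not> f x \<le> ennreal c}"
    then obtain k where "ennreal (c + 1 / Suc k) < f x"
      using c ennreal_less_imp_add_inverse_Suc_less[of c "f x"] by (auto simp: not_le)
    moreover obtain n where "x \<in> A n"
      using x A(2) by auto
    ultimately show "x \<in> (\<Union>k. \<Union>n. B k n)"
      using x by (auto simp: B_def)
  qed
  ultimately show ?thesis
    by (rule AE_I')
qed

lemma lp_pow_indicator_scaleR: "lp_pow p (\<lambda>g. indicator S x *\<^sub>R \<eta> g) = lp_pow p \<eta> * indicator S x"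
  by (simp add: lp_pow_scaleR indicator_def)

lemma Lp_pow_indicator_scaleR:
  assumes "S \<in> sets M"
  shows "Lp_pow M p (\<lambda>x. indicator S x *\<^sub>R v) = ennreal (norm v powr p) * emeasure M S"
  unfolding Lp_pow_def using assms
  by (subst nn_integral_cmult_indicator[symmetric])
    (auto intro!: nn_integral_cong simp: indicator_def)

lemma H_pow_indicator_scaleR:
  assumes "S \<in> sets M"
  shows "H_pow M p (\<lambda>g x. indicator S x *\<^sub>R \<eta> g) = lp_pow p \<eta> * emeasure M S"
  using assms by (simp add: H_pow_def lp_pow_def Lp_pow_indicator_scaleR nn_integral_multc)

lemma indicator_scaleR_in_Hspace:
  fixes \<eta> :: "'g \<Rightarrow> 'e::{real_normed_vector, second_countable_topology}"
  assumes "S \<in> sets M" "emeasure M S < \<infinity>" "lp_pow p \<eta> < \<top>"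
  shows "(\<lambda>g x. indicator S x *\<^sub>R \<eta> g) \<in> Hspace M p"
proof -
  have "\<And>g. (\<lambda>x. indicator S x *\<^sub>R \<eta> g) \<in> borel_measurable M"
    using assms(1) by measurable
  then show ?thesis
    using assms
    by (auto simp: Hspace_def Dspace_def Lp_pow_indicator_scaleR H_pow_indicator_scaleR
        ennreal_mult_less_top)
qed

lemma H_pow_reg_b_indicator_scaleR:
  fixes \<alpha> :: "'g::{group_add, countable} \<Rightarrow> 'w \<Rightarrow> 'w"
    and a :: "'g \<Rightarrow> 'w \<Rightarrow> ('e::{banach, second_countable_topology} \<Rightarrow>\<^sub>L 'e)"
  assumes \<alpha>: "\<And>g. \<alpha> g \<in> measurable M M" and a: "\<And>h. h \<in> F \<Longrightarrow> a h \<in> Linf_op M"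
    and S: "S \<in> sets M"
  shows "H_pow M p (reg_b \<alpha> F a (\<lambda>g x. indicator S x *\<^sub>R \<eta> g))
       = (\<integral>\<^sup>+ x. lp_pow p (traj_b \<alpha> F a x \<eta>) * indicator S x \<partial>M)"
proof -
  have "\<And>g. (\<lambda>x. indicator S x *\<^sub>R \<eta> g) \<in> borel_measurable M"
    using S by measurable
  then have reg_meas: "\<And>g. (\<lambda>x. reg_b \<alpha> F a (\<lambda>g x. indicator S x *\<^sub>R \<eta> g) g x) \<in> borel_measurable M"
    using \<alpha> a by (blast intro: borel_measurable_reg_b)
  show ?thesis
    unfolding H_pow_eq_nn_integral_lp_pow[OF reg_meas]
    by (simp add: reg_b_eq_traj_b traj_b_scaleR lp_pow_indicator_scaleR)
qed

lemma AE_lp_pow_traj_b_le: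
  fixes \<alpha> :: "'g::{group_add, countable} \<Rightarrow> 'w \<Rightarrow> 'w"
    and a :: "'g \<Rightarrow> 'w \<Rightarrow> ('e::{banach, second_countable_topology} \<Rightarrow>\<^sub>L 'e)"
  assumes M: "sigma_finite_measure M" and p: "0 < p"
    and \<alpha>: "\<And>g. \<alpha> g \<in> measurable M M" and a: "\<And>h. h \<in> F \<Longrightarrow> a h \<in> Linf_op M"
    and l: "op_norm (Hspace M p) (H_norm M p) (reg_b \<alpha> F a) (H_norm M p) = ennreal l" "0 \<le> l"
    and \<eta>: "lp_pow p \<eta> < \<top>"
  shows "AE x in M. lp_pow p (traj_b \<alpha> F a x \<eta>) \<le> ennreal (l powr p) * lp_pow p \<eta>"
proof (cases "\<eta> = (\<lambda>g. 0)")
  case True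
  then show ?thesis
    by (simp add: lp_pow_def)
next
  case False
  then obtain r where r: "lp_pow p \<eta> = ennreal r" "0 < r"
    using \<eta> p lp_pow_eq_0_iff[OF p, of \<eta>]
    by (cases "lp_pow p \<eta>") (auto simp: zero_less_iff_neq_zero)
  define f where "f x = lp_pow p (traj_b \<alpha> F a x \<eta>)" for x
  have "AE x in M. f x \<le> ennreal (l powr p * r)"
  proof (rule sigma_finite_measure.AE_le_if_set_nn_integral_le[OF M])
    show "f \<in> borel_measurable M"
      unfolding f_def using borel_measurable_traj_b[OF \<alpha> a]
      by (rule borel_measurable_lp_pow[where \<xi> = "\<lambda>g x. traj_b \<alpha> F a x \<eta> g"])
    show "0 \<le> l powr p * r"
      using r by simp
  next
    fix S assume S: "S \<in> sets M" "0 < emeasure M S" "emeasure M S < \<infinity>"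
    let ?\<xi> = "\<lambda>g x. indicator S x *\<^sub>R \<eta> g"
    have H_pow_\<xi>: "H_pow M p ?\<xi> = ennreal r * emeasure M S"
      using S(1) r(1) by (simp add: H_pow_indicator_scaleR)
    have "?\<xi> \<in> Hspace M p"
      using S \<eta> by (intro indicator_scaleR_in_Hspace)
    moreover have "0 < H_norm M p ?\<xi>"
      using H_pow_\<xi> r S by (simp add: H_norm_def zero_less_iff_neq_zero)
    ultimately have "H_norm M p (reg_b \<alpha> F a ?\<xi>) \<le> ennreal l * H_norm M p ?\<xi>"
      using H_norm_reg_b_le_op_norm_mult[where \<alpha> = \<alpha> and F = F and a = a, OF p _ _ \<alpha> a] l(1)
      by simp
    then have "H_pow M p (reg_b \<alpha> F a ?\<xi>) \<le> ennreal (l powr p) * H_pow M p ?\<xi>"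
      using p l(2) by (simp add: H_norm_def enn_root_le_mult_iff)
    then show "(\<integral>\<^sup>+ x. f x * indicator S x \<partial>M) \<le> ennreal (l powr p * r) * emeasure M S"
      using H_pow_\<xi> l(2) r(2)
      by (simp add: H_pow_reg_b_indicator_scaleR[OF \<alpha> a S(1)] f_def ennreal_mult mult.assoc)
  qed
  then show ?thesis
    using l(2) r by (simp add: f_def ennreal_mult)
qed

lemma closure_countable_dense_UNIV:
  obtains Q :: "'a::second_countable_topology set" where "countable Q" "closure Q = UNIV"
proof -
  obtain Q :: "'a set" where "countable Q" "\<And>X. open X \<Longrightarrow> X \<noteq> {} \<Longrightarrow> \<exists>d\<in>Q. d \<in> X"
    using countable_dense_exists by blast
  moreover have "closure Q = UNIV"
    using calculation(2) by (fastforce simp: closure_iff_nhds_not_empty)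
  ultimately show ?thesis
    using that by blast
qed

lemma borel_measurable_op_norm_traj_b:
  fixes \<alpha> :: "'g::{group_add, countable} \<Rightarrow> 'w \<Rightarrow> 'w"
    and a :: "'g \<Rightarrow> 'w \<Rightarrow> ('e::{banach, second_countable_topology} \<Rightarrow>\<^sub>L 'e)"
  assumes F: "finite F" and p: "0 < p"
    and \<alpha>: "\<And>g. \<alpha> g \<in> measurable M M" and a: "\<And>h. h \<in> F \<Longrightarrow> a h \<in> Linf_op M"
  shows "(\<lambda>x. op_norm (lpspace p) (lp_norm p) (traj_b \<alpha> F a x) (lp_norm p)) \<in> borel_measurable M"
proof -
  obtain Q :: "'e set" where Q: "countable Q" "closure Q = UNIV"
    by (rule closure_countable_dense_UNIV)
  have "(\<lambda>x. SUP \<eta>\<in>fin_supp_seqs Q. lp_norm p (traj_b \<alpha> F a x \<eta>) / lp_norm p \<eta>)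
      \<in> borel_measurable M"
  proof (rule borel_measurable_SUP)
    show "countable (fin_supp_seqs Q :: ('g \<Rightarrow> 'e) set)"
      using Q(1) by (rule countable_fin_supp_seqs)
    fix \<eta> :: "'g \<Rightarrow> 'e"
    have "(\<lambda>x. lp_pow p (\<lambda>g. traj_b \<alpha> F a x \<eta> g)) \<in> borel_measurable M"
      using borel_measurable_traj_b[OF \<alpha> a] by (rule borel_measurable_lp_pow)
    then show "(\<lambda>x. lp_norm p (traj_b \<alpha> F a x \<eta>) / lp_norm p \<eta>) \<in> borel_measurable M"
      unfolding lp_norm_def by measurable
  qed
  then show ?thesis
    using F p Q(2) by (simp add: op_norm_traj_b_eq_SUP_fin_supp_seqs)
qed

theorem esssup_traj_b_le_op_norm_reg_b:
  fixes \<alpha> :: "'g::{group_add, countable} \<Rightarrow> 'w \<Rightarrow> 'w"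
    and a :: "'g \<Rightarrow> 'w \<Rightarrow> ('e::{banach, second_countable_topology} \<Rightarrow>\<^sub>L 'e)"
  assumes M: "sigma_finite_measure M" and p: "0 < p" and F: "finite F"
    and \<alpha>: "\<And>g. \<alpha> g \<in> measurable M M" and a: "\<And>h. h \<in> F \<Longrightarrow> a h \<in> Linf_op M"
  shows "esssup M (\<lambda>x. op_norm (lpspace p) (lp_norm p) (traj_b \<alpha> F a x) (lp_norm p))
       \<le> op_norm (Hspace M p) (H_norm M p) (reg_b \<alpha> F a) (H_norm M p)"
    (is "esssup M ?N \<le> ?L")
proof (cases "?L = \<top>")
  case False
  then obtain l where l: "?L = ennreal l" "0 \<le> l"
    by (cases ?L) auto
  obtain Q :: "'e set" where Q: "countable Q" "closure Q = UNIV"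
    by (rule closure_countable_dense_UNIV)
  let ?D = "fin_supp_seqs Q :: ('g \<Rightarrow> 'e) set"
  let ?ratio = "\<lambda>\<eta> x. lp_norm p (traj_b \<alpha> F a x \<eta>) / lp_norm p \<eta>"
  have "AE x in M. \<forall>\<eta>\<in>?D. ?ratio \<eta> x \<le> ?L"
  proof (rule AE_ball_countable[THEN iffD2, OF countable_fin_supp_seqs[OF Q(1)]], intro ballI)
    fix \<eta> :: "'g \<Rightarrow> 'e" assume "\<eta> \<in> ?D"
    then have \<eta>: "lp_pow p \<eta> < \<top>"
      by (rule lp_pow_fin_supp_seqs_less_top)
    have "AE x in M. lp_pow p (traj_b \<alpha> F a x \<eta>) \<le> ennreal (l powr p) * lp_pow p \<eta>"
      using M p \<alpha> a l \<eta> by (rule AE_lp_pow_traj_b_le)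
    then show "AE x in M. ?ratio \<eta> x \<le> ?L"
    proof eventually_elim
      case (elim x)
      then have "lp_norm p (traj_b \<alpha> F a x \<eta>) \<le> ennreal l * lp_norm p \<eta>"
        using p l(2) by (simp add: lp_norm_def enn_root_le_mult_iff)
      then show ?case
        using p l(1) \<eta> by (simp add: lp_norm_traj_b_divide_le_iff)
    qed
  qed
  then have "AE x in M. ?N x \<le> ?L"
    by eventually_elim (simp add: op_norm_traj_b_eq_SUP_fin_supp_seqs[OF F p Q(2)] SUP_least)
  moreover have "?N \<in> borel_measurable M"
    using F p \<alpha> a by (rule borel_measurable_op_norm_traj_b)
  ultimately show ?thesis
    by (rule esssup_I[rotated])
qed simp

theorem lemma3p5:
  fixes M :: "'w measure" and p :: real
    and \<alpha> :: "'g::{group_add, countable} \<Rightarrow> 'w \<Rightarrow> 'w"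
    and F :: "'g set"
    and a :: "'g \<Rightarrow> 'w \<Rightarrow> ('e::{banach, second_countable_topology} \<Rightarrow>\<^sub>L 'e)"
  assumes "sigma_finite_measure M"
    and "separable_measure M"
    and "1 < p"
    and "\<And>g h. \<alpha> (g + h) = \<alpha> g \<circ> \<alpha> h"
    and "\<alpha> 0 = id"
    and "\<And>g. \<alpha> g \<in> measurable M M"
    and "\<And>g N. N \<in> null_sets M \<Longrightarrow> \<alpha> g -` N \<inter> space M \<in> null_sets M"
    and "\<And>g N. N \<in> null_sets M \<Longrightarrow> \<alpha> g ` N \<in> null_sets M"
    and "finite F"
    and "\<And>g. g \<in> F \<Longrightarrow> a g \<in> Linf_op M"
  shows "op_norm (Hspace M p) (H_norm M p) (reg_b \<alpha> F a) (H_norm M p)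
       = esssup M (\<lambda>x. op_norm (lpspace p) (lp_norm p) (traj_b \<alpha> F a x) (lp_norm p))"
proof -
  have p: "0 < p"
    using \<open>1 < p\<close> by simp
  show ?thesis
  proof (rule antisym)
    show "op_norm (Hspace M p) (H_norm M p) (reg_b \<alpha> F a) (H_norm M p)
        \<le> esssup M (\<lambda>x. op_norm (lpspace p) (lp_norm p) (traj_b \<alpha> F a x) (lp_norm p))"
      using p assms(6,10) by (rule op_norm_reg_b_le_esssup_traj_b)
    show "esssup M (\<lambda>x. op_norm (lpspace p) (lp_norm p) (traj_b \<alpha> F a x) (lp_norm p))
        \<le> op_norm (Hspace M p) (H_norm M p) (reg_b \<alpha> F a) (H_norm M p)"
      using assms(1) p assms(9,6,10) by (rule esssup_traj_b_le_op_norm_reg_b)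
  qed
qed

end
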